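(* Let $s \ge 2$ and let $X$ be an $s$-distance set contained in the unit sphere $S^{d-1} \subset \mathbb{R}^d$, with $B(X) = \{\beta_1, \ldots, \beta_s\}$. Let $N = \binom{d+s-2}{s-1} + \binom{d+s-3}{s-2}$. If $|X| \ge 2N$, then for each $i = 1, \ldots, s$ the number \[ k_i = \prod_{j=1,\ldots,s,\ j \neq i} \frac{1 - \beta_j}{\beta_i - \beta_j} \] is an integer, and $|k_i| \le U(N)$.
   Context: A finite set $X \subset \mathbb{R}^d$ is an $s$-distance set if the set of Euclidean distances between distinct points of $X$ has exactly $s$ elements. For $X \subset S^{d-1}$, $B(X) = \{(x,y) : x, y \in X, x \neq y\}$, where $(\cdot,\cdot)$ is the standard inner product (so for $X\subset S^{d-1}$, $|B(X)|=s$). The function $U$ is defined by $U(N) = \left\lfloor \frac{1}{2} + \sqrt{\frac{N^2}{2N-2} + \frac{1}{4}} \right\rfloor$. *)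

theory Defs
  imports "HOL-Analysis.Analysis"
begin

definition distances :: "'a::metric_space set \<Rightarrow> real set" where
  "distances X = {dist x y | x y. x \<in> X \<and> y \<in> X \<and> x \<noteq> y}"

definition s_distance_set :: "'a::metric_space set \<Rightarrow> nat \<Rightarrow> bool" where
  "s_distance_set X s \<longleftrightarrow> finite X \<and> card (distances X) = s"

definition B :: "'a::real_inner set \<Rightarrow> real set" where
  "B X = {x \<bullet> y | x y. x \<in> X \<and> y \<in> X \<and> x \<noteq> y}"

definition U :: "nat \<Rightarrow> int" where
  "U N = \<lfloor>1/2 + sqrt ((real N)^2 / (2 * real N - 2) + 1/4)\<rfloor>"

end

theory Submission
  imports Defs "Jordan_Normal_Form.Char_Poly" "HOL-Library.Multiset"
begin

text \<open>Fix \<open>\<beta> \<in> B(X)\<close> and let \<open>P(t) = \<Prod>\<gamma> \<in> B(X) - {\<beta>}. (t - \<gamma>) / (\<beta> - \<gamma>)\<close>,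
  a polynomial of degree at most \<open>s - 1\<close> with \<open>k = P(1)\<close>. On the unit sphere,
  \<open>x \<mapsto> P(x \<bullet> y)\<close> is a combination of the at most \<open>N\<close> monomials of degree \<open>s - 1\<close>
  and \<open>s - 2\<close>. Hence the matrix with entries \<open>P(x \<bullet> y)\<close>, which is \<open>A + k I\<close> for the
  adjacency matrix \<open>A\<close> of the graph \<open>x \<bullet> y = \<beta>\<close> on \<open>X\<close>, factors through an
  \<open>N\<close>-dimensional space; so does \<open>A - J + k I\<close>, since the constant \<open>1\<close> lies in the same
  span. Thus \<open>-k\<close> is an eigenvalue of multiplicity at least \<open>|X| - N \<ge> |X| / 2\<close> of both
  integer matrices \<open>A\<close> and \<open>A - J\<close>. Their characteristic polynomials differ (their traces
  do), and an irrational \<open>-k\<close> and its conjugate would both be roots of multiplicity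
  \<open>\<ge> |X| / 2\<close> of the difference, whose degree is less than \<open>|X|\<close>. So \<open>k\<close> is rational,
  and being an algebraic integer it is an integer. Finally \<open>tr(M)\<^sup>2 \<le> rank(M) \<cdot> \<parallel>M\<parallel>\<^sub>F\<^sup>2\<close>
  for \<open>M = A + k I - J / 2\<close> gives \<open>|X| (k - 1/2)\<^sup>2 \<le> N ((k - 1/2)\<^sup>2 + (|X| - 1) / 4)\<close>,
  which with \<open>|X| \<ge> 2 N\<close> yields \<open>|k| \<le> U(N)\<close>.\<close>

(* Jordan_Normal_Form's notation for the scalar product of vectors would make every
   inner product below ambiguous. *)
no_notation scalar_prod (infix "\<bullet>" 70)

section \<open>The trace of a low-rank matrix\<close>

lemma square_add_le_mult_add:
  fixes a b A B c :: real
  assumes "a\<^sup>2 \<le> c * A" "b\<^sup>2 \<le> B" "0 \<le> A" "0 \<le> B" "0 \<le> c"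
  shows "(a + b)\<^sup>2 \<le> (c + 1) * (A + B)"
proof -
  have "(2*a*b)\<^sup>2 = 4 * a\<^sup>2 * b\<^sup>2" by (simp add: power2_eq_square)
  also have "\<dots> \<le> 4 * (c*A) * B"
    using assms by (intro mult_mono) (auto intro: mult_left_mono)
  also have "\<dots> \<le> (A + c*B)\<^sup>2"
    using sum_power2_ge_zero[of "A - c*B" 0] by (simp add: power2_eq_square algebra_simps)
  finally have "\<bar>2*a*b\<bar> \<le> \<bar>A + c*B\<bar>" using abs_le_square_iff by blast
  hence "2*a*b \<le> A + c*B" using assms by auto
  thus ?thesis using assms by (simp add: power2_eq_square algebra_simps)
qed

lemma trace_square_rank_one_update:
  fixes M M' :: "nat \<Rightarrow> nat \<Rightarrow> real" and u w :: "nat \<Rightarrow> real"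
  assumes unit: "(\<Sum>i<n. (u i)\<^sup>2) = 1"
    and decomp: "\<And>i j. M i j = M' i j + u i * w j"
    and orth: "\<And>j. (\<Sum>i<n. u i * M' i j) = 0"
    and le: "(\<Sum>i<n. M' i i)\<^sup>2 \<le> c * (\<Sum>i<n. \<Sum>j<n. (M' i j)\<^sup>2)" and "0 \<le> c"
  shows "(\<Sum>i<n. M i i)\<^sup>2 \<le> (c + 1) * (\<Sum>i<n. \<Sum>j<n. (M i j)\<^sup>2)"
proof -
  have cross: "(\<Sum>i<n. \<Sum>j<n. M' i j * (u i * w j)) = 0"
  proof -
    have "(\<Sum>i<n. \<Sum>j<n. M' i j * (u i * w j)) = (\<Sum>j<n. w j * (\<Sum>i<n. u i * M' i j))"
      by (subst sum.swap) (simp add: sum_distrib_left mult_ac)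
    thus ?thesis using orth by simp
  qed
  have rank_one: "(\<Sum>i<n. \<Sum>j<n. (u i * w j)\<^sup>2) = (\<Sum>j<n. (w j)\<^sup>2)"
    using unit by (simp add: power_mult_distrib flip: sum_distrib_left sum_distrib_right)
  have "(\<Sum>i<n. \<Sum>j<n. (M i j)\<^sup>2)
      = (\<Sum>i<n. \<Sum>j<n. (M' i j)\<^sup>2 + 2 * (M' i j * (u i * w j)) + (u i * w j)\<^sup>2)"
    by (simp add: decomp power2_sum algebra_simps)
  also have "\<dots> = (\<Sum>i<n. \<Sum>j<n. (M' i j)\<^sup>2) + (\<Sum>j<n. (w j)\<^sup>2)"
    using cross rank_one by (simp add: sum.distrib flip: sum_distrib_left)
  finally have frobenius: "(\<Sum>i<n. \<Sum>j<n. (M i j)\<^sup>2) = (\<Sum>i<n. \<Sum>j<n. (M' i j)\<^sup>2) + (\<Sum>j<n. (w j)\<^sup>2)" .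
  have trace: "(\<Sum>i<n. M i i) = (\<Sum>i<n. M' i i) + (\<Sum>i<n. u i * w i)"
    by (simp add: decomp sum.distrib)
  have "(\<Sum>i<n. u i * w i)\<^sup>2 \<le> (\<Sum>j<n. (w j)\<^sup>2)"
    using Cauchy_Schwarz_ineq_sum[of u w "{..<n}"] unit by simp
  from square_add_le_mult_add[OF le this] \<open>0 \<le> c\<close>
  show ?thesis unfolding trace frobenius by (simp add: sum_nonneg)
qed

lemma rank_one_orthogonal_split:
  fixes f h :: "nat \<Rightarrow> nat \<Rightarrow> real"
  assumes "i0 < n" "f m i0 \<noteq> 0"
  obtains f' :: "nat \<Rightarrow> nat \<Rightarrow> real" and u w :: "nat \<Rightarrow> real"
  where "(\<Sum>i<n. (u i)\<^sup>2) = 1"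
    and "\<And>i j. (\<Sum>l<Suc m. f l i * h l j) = (\<Sum>l<m. f' l i * h l j) + u i * w j"
    and "\<And>j. (\<Sum>i<n. u i * (\<Sum>l<m. f' l i * h l j)) = 0"
proof -
  define r where "r = sqrt (\<Sum>i<n. (f m i)\<^sup>2)"
  have pos: "0 < (\<Sum>i<n. (f m i)\<^sup>2)" using assms by (intro sum_pos2[of _ i0]) auto
  hence r: "0 < r" "r\<^sup>2 = (\<Sum>i<n. (f m i)\<^sup>2)" by (auto simp: r_def)
  define u where "u i = f m i / r" for i
  define cf where "cf l = (\<Sum>i<n. f l i * u i)" for l
  define f' where "f' l i = f l i - cf l * u i" for l i
  define w where "w j = (\<Sum>l<Suc m. cf l * h l j)" for j
  have unit: "(\<Sum>i<n. (u i)\<^sup>2) = 1"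
    using r pos by (simp add: u_def power_divide flip: sum_divide_distrib)
  have "cf m = (\<Sum>i<n. (f m i)\<^sup>2) / r"
    by (simp add: cf_def u_def power2_eq_square sum_divide_distrib)
  also have "\<dots> = r\<^sup>2 / r" by (simp add: r(2))
  also have "\<dots> = r" using r(1) by (simp add: power2_eq_square)
  finally have "f m i = cf m * u i" for i using r by (simp add: u_def)
  hence "(\<Sum>l<Suc m. f l i * h l j) = (\<Sum>l<m. f' l i * h l j) + u i * w j" for i j
    by (simp add: w_def f'_def algebra_simps sum_subtractf sum_distrib_left)
  moreover have "(\<Sum>i<n. u i * (\<Sum>l<m. f' l i * h l j)) = 0" for j
  proof -
    have "(\<Sum>i<n. u i * f' l i) = cf l - cf l * (\<Sum>i<n. (u i)\<^sup>2)" for l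
      by (simp add: f'_def right_diff_distrib sum_subtractf sum_distrib_left power2_eq_square
          mult_ac) (simp add: cf_def mult.commute)
    hence "(\<Sum>l<m. h l j * (\<Sum>i<n. u i * f' l i)) = 0" using unit by simp
    thus ?thesis by (simp add: sum_distrib_left mult_ac sum.swap[of _ "{..<n}"])
  qed
  ultimately show thesis using unit that by blast
qed

lemma trace_square_le_rank_mult_frobenius:
  fixes f h :: "nat \<Rightarrow> nat \<Rightarrow> real"
  shows "(\<Sum>i<n. \<Sum>l<m. f l i * h l i)\<^sup>2 \<le> real m * (\<Sum>i<n. \<Sum>j<n. (\<Sum>l<m. f l i * h l j)\<^sup>2)"
proof (induction m arbitrary: f)
  case 0
  then show ?case by simp
next
  case (Suc m)
  define M where "M i j = (\<Sum>l<Suc m. f l i * h l j)" for i j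
  have "(\<Sum>i<n. M i i)\<^sup>2 \<le> (real m + 1) * (\<Sum>i<n. \<Sum>j<n. (M i j)\<^sup>2)"
  proof (cases "\<forall>i<n. f m i = 0")
    case True
    hence "M i j = (\<Sum>l<m. f l i * h l j)" if "i < n" for i j
      using that by (simp add: M_def)
    with Suc.IH[of f] have "(\<Sum>i<n. M i i)\<^sup>2 \<le> real m * (\<Sum>i<n. \<Sum>j<n. (M i j)\<^sup>2)" by simp
    also have "\<dots> \<le> (real m + 1) * (\<Sum>i<n. \<Sum>j<n. (M i j)\<^sup>2)"
      by (intro mult_right_mono) (auto intro!: sum_nonneg)
    finally show ?thesis .
  next
    case False
    then obtain i0 where "i0 < n" "f m i0 \<noteq> 0" by blast
    then obtain f' u w where "(\<Sum>i<n. (u i)\<^sup>2) = 1"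
      and "\<And>i j. M i j = (\<Sum>l<m. f' l i * h l j) + u i * w j"
      and "\<And>j. (\<Sum>i<n. u i * (\<Sum>l<m. f' l i * h l j)) = 0"
      unfolding M_def by (rule rank_one_orthogonal_split[where h = h]) blast
    thus ?thesis by (intro trace_square_rank_one_update[OF _ _ _ Suc.IH]) auto
  qed
  thus ?case by (simp add: M_def add.commute)
qed

section \<open>Characteristic polynomials\<close>

lemma det_sylvester:
  fixes P Q :: "'a::idom mat" and L :: 'a
  assumes P: "P \<in> carrier_mat n m" and Q: "Q \<in> carrier_mat m n"
  shows "det (L \<cdot>\<^sub>m 1\<^sub>m n - P * Q) * L ^ m = L ^ n * det (L \<cdot>\<^sub>m 1\<^sub>m m - Q * P)"
proof -
  define M where "M = four_block_mat (L \<cdot>\<^sub>m 1\<^sub>m n) P Q (1\<^sub>m m)"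
  define E where "E = four_block_mat (1\<^sub>m n) (0\<^sub>m n m) (- Q) (1\<^sub>m m)"
  define E' where "E' = four_block_mat (1\<^sub>m n) (- P) (0\<^sub>m m n) (L \<cdot>\<^sub>m 1\<^sub>m m)"
  have M: "M \<in> carrier_mat (n+m) (n+m)" and E: "E \<in> carrier_mat (n+m) (n+m)"
    and E': "E' \<in> carrier_mat (n+m) (n+m)"
    unfolding M_def E_def E'_def using P Q by (auto intro!: four_block_carrier_mat)
  have cancel: "Q + - Q = 0\<^sub>m m n" "- P + P = 0\<^sub>m n m"
    "L \<cdot>\<^sub>m 1\<^sub>m n + - (P * Q) = L \<cdot>\<^sub>m 1\<^sub>m n - P * Q"
    "- (Q * P) + L \<cdot>\<^sub>m 1\<^sub>m m = L \<cdot>\<^sub>m 1\<^sub>m m - Q * P"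
    "- (L \<cdot>\<^sub>m 1\<^sub>m n * P) + P * (L \<cdot>\<^sub>m 1\<^sub>m m) = 0\<^sub>m n m"
    using P Q by (auto intro!: eq_matI simp: mult_smult_assoc_mat[OF one_carrier_mat P]
        mult_smult_distrib[OF P one_carrier_mat])
  have prod_E: "M * E = four_block_mat (L \<cdot>\<^sub>m 1\<^sub>m n - P * Q) P (0\<^sub>m m n) (1\<^sub>m m)"
    unfolding M_def E_def
    by (subst mult_four_block_mat[OF smult_carrier_mat[OF one_carrier_mat] P Q one_carrier_mat
        one_carrier_mat zero_carrier_mat uminus_carrier_mat[OF Q] one_carrier_mat])
      (use P Q cancel in simp)
  have ME: "det M * det E = det (L \<cdot>\<^sub>m 1\<^sub>m n - P * Q)"
    unfolding det_mult[OF M E, symmetric] prod_E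
    by (subst det_four_block_mat_lower_left_zero[of _ n _ m]) (use P Q in auto)
  have prod_E': "M * E' = four_block_mat (L \<cdot>\<^sub>m 1\<^sub>m n) (0\<^sub>m n m) Q (L \<cdot>\<^sub>m 1\<^sub>m m - Q * P)"
    unfolding M_def E'_def
    by (subst mult_four_block_mat[OF smult_carrier_mat[OF one_carrier_mat] P Q one_carrier_mat
        one_carrier_mat uminus_carrier_mat[OF P] zero_carrier_mat smult_carrier_mat[OF one_carrier_mat]])
      (use P Q cancel in simp)
  have ME': "det M * det E' = L ^ n * det (L \<cdot>\<^sub>m 1\<^sub>m m - Q * P)"
    unfolding det_mult[OF M E', symmetric] prod_E'
    by (subst det_four_block_mat_upper_right_zero[of _ n _ m]) (use P Q in auto)
  have "det E = 1" unfolding E_def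
    by (subst det_four_block_mat_upper_right_zero[of _ n _ m]) (use Q in auto)
  moreover have "det E' = L ^ m" unfolding E'_def
    by (subst det_four_block_mat_lower_left_zero[of _ n _ m]) (use P in auto)
  ultimately show ?thesis using ME ME' by simp
qed

lemma linear_factor_power_dvd_char_poly:
  fixes A P Q :: "'a::field mat"
  assumes A: "A \<in> carrier_mat n n" and P: "P \<in> carrier_mat n m" and Q: "Q \<in> carrier_mat m n"
    and factor: "A + c \<cdot>\<^sub>m 1\<^sub>m n = P * Q" and "m \<le> n"
  shows "[:c, 1:] ^ (n - m) dvd char_poly A"
proof -
  define L where "L = [:c, 1:]"
  define P' where "P' = map_mat (\<lambda>a. [:a:]) P"
  define Q' where "Q' = map_mat (\<lambda>a. [:a:]) Q"
  have P': "P' \<in> carrier_mat n m" and Q': "Q' \<in> carrier_mat m n"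
    using P Q by (auto simp: P'_def Q'_def)
  have "P' * Q' = map_mat (\<lambda>a. [:a:]) (A + c \<cdot>\<^sub>m 1\<^sub>m n)"
    using map_poly_mult(1)[OF P Q] by (simp add: P'_def Q'_def factor)
  hence "char_poly_matrix A = L \<cdot>\<^sub>m 1\<^sub>m n - P' * Q'"
    using A by (intro eq_matI) (auto simp: char_poly_matrix_def L_def)
  hence "char_poly A * L ^ m = L ^ n * det (L \<cdot>\<^sub>m 1\<^sub>m m - Q' * P')"
    unfolding char_poly_def by (simp add: det_sylvester[OF P' Q'])
  also have "\<dots> = L ^ m * (L ^ (n - m) * det (L \<cdot>\<^sub>m 1\<^sub>m m - Q' * P'))"
    using \<open>m \<le> n\<close> by (simp flip: power_add mult.assoc)
  finally have "char_poly A = L ^ (n - m) * det (L \<cdot>\<^sub>m 1\<^sub>m m - Q' * P')"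
    by (simp add: L_def mult.commute)
  thus ?thesis unfolding L_def by simp
qed

lemma sum_lessThan_Suc_skip:
  fixes g :: "nat \<Rightarrow> 'a::ab_group_add"
  assumes "i < Suc m"
  shows "(\<Sum>j<m. g (if j < i then j else Suc j)) = (\<Sum>j<Suc m. g j) - g i"
proof -
  define f where "f j = (if j < i then j else Suc j)" for j
  have "inj_on f {..<m}" unfolding f_def inj_on_def by auto
  moreover have "f ` {..<m} = {..<Suc m} - {i}"
  proof (intro equalityI subsetI)
    fix y assume "y \<in> {..<Suc m} - {i}"
    thus "y \<in> f ` {..<m}"
      using assms unfolding f_def by (cases "y < i") (auto intro: image_eqI[of _ _ "y - 1"])
  qed (auto simp: f_def)
  ultimately have "(\<Sum>j<m. g (f j)) = sum g ({..<Suc m} - {i})"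
    by (metis sum.reindex comp_apply sum.cong)
  thus ?thesis using assms by (simp add: sum_diff1 f_def)
qed

lemma coeff_char_poly_trace:
  fixes A :: "'a::{idom,ring_char_0} mat"
  assumes "A \<in> carrier_mat (Suc n) (Suc n)"
  shows "coeff (char_poly A) n = - (\<Sum>i<Suc n. A $$ (i,i))"
  using assms
proof (induction n arbitrary: A)
  case 0
  hence "upper_triangular A" "diag_mat A = [A $$ (0,0)]"
    by (auto simp: upper_triangular_def diag_mat_def)
  then show ?case using char_poly_upper_triangular[OF 0] by simp
next
  case (Suc n)
  let ?tr = "\<Sum>i<Suc (Suc n). A $$ (i,i)"
  have minor: "coeff (char_poly (mat_delete A i i)) n = - (?tr - A $$ (i,i))"
    if i: "i < Suc (Suc n)" for i
  proof -
    have "coeff (char_poly (mat_delete A i i)) n = - (\<Sum>j<Suc n. mat_delete A i i $$ (j,j))"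
      using Suc.IH mat_delete_carrier[OF Suc.prems] by (metis diff_Suc_1)
    also have "(\<Sum>j<Suc n. mat_delete A i i $$ (j,j))
        = (\<Sum>j<Suc n. A $$ (if j < i then j else Suc j, if j < i then j else Suc j))"
      using Suc.prems by (intro sum.cong) (auto simp: mat_delete_def)
    also have "\<dots> = ?tr - A $$ (i,i)"
      by (rule sum_lessThan_Suc_skip[where g = "\<lambda>j. A $$ (j,j)", OF i])
    finally show ?thesis .
  qed
  have "of_nat (Suc n) * coeff (char_poly A) (Suc n) = coeff (pderiv (char_poly A)) n"
    by (simp add: coeff_pderiv)
  also have "\<dots> = (\<Sum>i<Suc (Suc n). coeff (char_poly (mat_delete A i i)) n)"
    by (simp add: pderiv_char_poly[OF Suc.prems] coeff_sum)
  also have "\<dots> = (\<Sum>i<Suc (Suc n). - (?tr - A $$ (i,i)))"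
    by (intro sum.cong) (auto simp: minor)
  also have "\<dots> = of_nat (Suc n) * (- ?tr)"
    by (simp add: sum_subtractf algebra_simps)
  finally show ?case by (metis mult_cancel_left of_nat_eq_0_iff nat.distinct(1))
qed

section \<open>Irrational roots of rational polynomials\<close>

interpretation of_rat_poly: map_poly_inj_idom_hom "of_rat :: rat \<Rightarrow> real" ..

definition rat_min_poly :: "real \<Rightarrow> rat poly \<Rightarrow> bool" where
  "rat_min_poly \<mu> p \<longleftrightarrow> p \<noteq> 0 \<and> poly (map_poly of_rat p) \<mu> = 0 \<and>
     (\<forall>q. q \<noteq> 0 \<and> poly (map_poly of_rat q) \<mu> = 0 \<longrightarrow> degree p \<le> degree q)"

lemma rat_min_poly_exists:
  assumes "q \<noteq> 0" "poly (map_poly of_rat q) \<mu> = 0"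
  obtains p where "rat_min_poly \<mu> p"
proof -
  define R where "R d \<longleftrightarrow> (\<exists>q. q \<noteq> 0 \<and> poly (map_poly of_rat q) \<mu> = 0 \<and> degree q = d)" for d
  have "R (degree q)" using assms unfolding R_def by blast
  then obtain d where "R d" "\<And>d'. R d' \<Longrightarrow> d \<le> d'"
    using ex_has_least_nat[of R "degree q" id] by auto
  then obtain p where "p \<noteq> 0" "poly (map_poly of_rat p) \<mu> = 0" "degree p = d"
    unfolding R_def by blast
  with \<open>\<And>d'. R d' \<Longrightarrow> d \<le> d'\<close> have "rat_min_poly \<mu> p"
    unfolding rat_min_poly_def R_def by auto
  thus thesis by (rule that)
qed

lemma rat_min_poly_dvd:
  assumes p: "rat_min_poly \<mu> p" and q: "poly (map_poly of_rat q) \<mu> = 0"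
  shows "p dvd q"
proof (rule ccontr)
  assume "\<not> p dvd q"
  hence nz: "q mod p \<noteq> 0" by (simp add: mod_eq_0_iff_dvd)
  have "q mod p = q - p * (q div p)" by (rule minus_mult_div_eq_mod[symmetric])
  hence "poly (map_poly of_rat (q mod p)) \<mu> = 0"
    using p q by (simp add: rat_min_poly_def of_rat_poly.hom_minus of_rat_poly.hom_mult)
  hence "degree p \<le> degree (q mod p)" using p nz by (simp add: rat_min_poly_def)
  moreover have "degree (q mod p) < degree p"
    using p nz by (intro degree_mod_less') (auto simp: rat_min_poly_def)
  ultimately show False by simp
qed

lemma rat_min_poly_degree_ge_2:
  assumes p: "rat_min_poly \<mu> p" and "\<mu> \<notin> \<rat>"
  shows "2 \<le> degree p"
proof (rule ccontr)
  assume "\<not> 2 \<le> degree p"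
  hence "p = [:coeff p 0, coeff p 1:]"
    by (intro poly_eqI) (auto simp: coeff_pCons coeff_eq_0 split: nat.split)
  then obtain a b where ab: "p = [:a, b:]" by blast
  have "of_rat a + \<mu> * of_rat b = 0"
    using p by (simp add: rat_min_poly_def ab Polynomial.map_poly_pCons)
  moreover have "b \<noteq> 0" using p by (auto simp: rat_min_poly_def ab)
  ultimately have "\<mu> = of_rat (- a / b)" by (simp add: field_simps of_rat_divide of_rat_minus)
  thus False using \<open>\<mu> \<notin> \<rat>\<close> by (metis Rats_of_rat)
qed

lemma rat_min_poly_order:
  assumes p: "rat_min_poly \<mu> p"
  shows "order \<mu> (map_poly of_rat p) = 1"
proof -
  have "degree p \<noteq> 0"
  proof
    assume "degree p = 0"
    then obtain c where "p = [:c:]" by (rule degree_eq_zeroE)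
    with p show False by (simp add: rat_min_poly_def Polynomial.map_poly_pCons)
  qed
  hence "pderiv p \<noteq> 0" by (simp add: pderiv_eq_0_iff)
  moreover have "degree (pderiv p) < degree p"
    using \<open>degree p \<noteq> 0\<close> by (simp add: degree_pderiv)
  ultimately have "poly (map_poly of_rat (pderiv p)) \<mu> \<noteq> 0"
    using p unfolding rat_min_poly_def by (meson not_le)
  hence "order \<mu> (pderiv (map_poly of_rat p)) = 0"
    by (simp add: order_root of_rat_hom.map_poly_pderiv)
  moreover have "order \<mu> (map_poly of_rat p) = Suc (order \<mu> (pderiv (map_poly of_rat p)))"
    using p by (intro order_pderiv) (auto simp: rat_min_poly_def)
  ultimately show ?thesis by simp
qed

lemma rat_min_poly_power_dvd:
  assumes p: "rat_min_poly \<mu> p"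
  shows "q \<noteq> 0 \<Longrightarrow> j \<le> order \<mu> (map_poly of_rat q) \<Longrightarrow> p ^ j dvd q"
proof (induction j arbitrary: q)
  case 0 thus ?case by simp
next
  case (Suc j)
  hence "poly (map_poly of_rat q) \<mu> = 0" by (simp add: order_root)
  with rat_min_poly_dvd[OF p] obtain q' where q': "q = p * q'" by blast
  with Suc.prems have "q' \<noteq> 0" by auto
  have "order \<mu> (map_poly of_rat q) = order \<mu> (map_poly of_rat p) + order \<mu> (map_poly of_rat q')"
    using Suc.prems q' by (simp add: of_rat_poly.hom_mult order_mult)
  with Suc.prems rat_min_poly_order[OF p] have "j \<le> order \<mu> (map_poly of_rat q')" by simp
  with Suc.IH[OF \<open>q' \<noteq> 0\<close>] show ?case by (simp add: q')
qed

text \<open>An irrational root of a rational polynomial comes with its conjugates, all of the same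
  multiplicity.\<close>

lemma rat_poly_irrational_root_order:
  fixes q :: "rat poly" and \<mu> :: real
  assumes "q \<noteq> 0" "\<mu> \<notin> \<rat>"
  shows "2 * order \<mu> (map_poly of_rat q) \<le> degree q"
proof (cases "order \<mu> (map_poly of_rat q) = 0")
  case False
  hence "poly (map_poly of_rat q) \<mu> = 0" using assms by (simp add: order_root)
  with assms(1) obtain p where p: "rat_min_poly \<mu> p" by (rule rat_min_poly_exists)
  hence "p ^ order \<mu> (map_poly of_rat q) dvd q"
    using assms by (intro rat_min_poly_power_dvd) auto
  hence "degree (p ^ order \<mu> (map_poly of_rat q)) \<le> degree q"
    using assms by (intro dvd_imp_degree_le) auto
  moreover have "2 \<le> degree p" by (rule rat_min_poly_degree_ge_2[OF p assms(2)])
  ultimately show ?thesis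
    using p by (simp add: degree_power_eq rat_min_poly_def)
      (metis le_trans mult.commute mult_le_mono1)
qed simp

section \<open>Adjacency matrices with a low-rank shift\<close>

lemma int_of_common_root_of_high_order:
  fixes p1 p2 :: "int poly" and k :: real
  assumes monic: "lead_coeff p1 = 1" "lead_coeff p2 = 1"
    and deg: "degree p1 = n" "degree p2 = n" and "p1 \<noteq> p2"
    and dvd: "[:k, 1:] ^ g dvd of_int_poly p1" "[:k, 1:] ^ g dvd of_int_poly p2"
    and "0 < n" "n \<le> 2 * g"
  shows "k \<in> \<int>"
proof (cases "- k \<in> \<rat>")
  case False
  define q :: "rat poly" where "q = of_int_poly (p1 - p2)"
  have "q \<noteq> 0" using \<open>p1 \<noteq> p2\<close> by (simp add: q_def)
  have "degree (p1 - p2) \<le> n" using deg by (intro degree_diff_le) auto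
  moreover have "coeff (p1 - p2) n = 0" using monic deg by simp
  ultimately have "degree (p1 - p2) < n"
    using \<open>p1 \<noteq> p2\<close> eq_zero_or_degree_less[of "p1 - p2" n] by auto
  hence "degree q < n" by (simp add: q_def of_int_hom.degree_map_poly_hom)
  have "map_poly of_rat q = (of_int_poly p1 - of_int_poly p2 :: real poly)"
    by (simp add: q_def of_int_poly_hom.hom_minus of_rat_poly.hom_minus map_poly_map_poly comp_def)
  hence "[:k, 1:] ^ g dvd map_poly of_rat q" using dvd by (simp add: dvd_diff)
  hence "g \<le> order (- k) (map_poly of_rat q)"
    using order_divides[of "- k" g "map_poly of_rat q"] \<open>q \<noteq> 0\<close> by simp
  with rat_poly_irrational_root_order[OF \<open>q \<noteq> 0\<close> False] \<open>degree q < n\<close> \<open>n \<le> 2 * g\<close>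
  show ?thesis by linarith
next
  case True
  have "0 < g" using \<open>0 < n\<close> \<open>n \<le> 2 * g\<close> by auto
  hence "[:k, 1:] dvd [:k, 1:] ^ g" by (intro dvd_power) auto
  hence "[:k, 1:] dvd of_int_poly p1" using dvd(1) by (rule dvd_trans)
  hence "poly (of_int_poly p1) (- k) = 0" by (simp add: poly_eq_0_iff_dvd)
  hence "algebraic_int (- k)" using monic(1) algebraic_int_altdef_ipoly by blast
  with True show ?thesis by (metis Ints_minus minus_minus rational_algebraic_int_is_int)
qed

lemma int_of_low_rank_shifts:
  fixes A A' :: "int mat" and F G G' :: "real mat"
  assumes A: "A \<in> carrier_mat n n" and A': "A' \<in> carrier_mat n n"
    and F: "F \<in> carrier_mat n m" and G: "G \<in> carrier_mat m n" and G': "G' \<in> carrier_mat m n"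
    and factor: "map_mat of_int A + k \<cdot>\<^sub>m 1\<^sub>m n = F * G"
    and factor': "map_mat of_int A' + k \<cdot>\<^sub>m 1\<^sub>m n = F * G'"
    and trace: "(\<Sum>i<n. A $$ (i,i)) \<noteq> (\<Sum>i<n. A' $$ (i,i))"
    and "2 * m \<le> n"
  shows "k \<in> \<int>"
proof -
  obtain n' where n': "n = Suc n'" using trace by (cases n) auto
  have "coeff (char_poly A) n' \<noteq> coeff (char_poly A') n'"
    using trace A A' by (simp add: n' coeff_char_poly_trace)
  hence "char_poly A \<noteq> char_poly A'" by metis
  moreover have "[:k, 1:] ^ (n - m) dvd of_int_poly (char_poly A)"
    using linear_factor_power_dvd_char_poly[OF _ F G factor] A \<open>2 * m \<le> n\<close>
    by (simp add: of_int_hom.char_poly_hom)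
  moreover have "[:k, 1:] ^ (n - m) dvd of_int_poly (char_poly A')"
    using linear_factor_power_dvd_char_poly[OF _ F G' factor'] A' \<open>2 * m \<le> n\<close>
    by (simp add: of_int_hom.char_poly_hom)
  ultimately show ?thesis
    using degree_monic_char_poly[OF A] degree_monic_char_poly[OF A'] \<open>2 * m \<le> n\<close> n'
    by (intro int_of_common_root_of_high_order[of "char_poly A" "char_poly A'" n]) auto
qed

lemma int_of_low_rank_graph_shift:
  fixes R :: "nat \<Rightarrow> nat \<Rightarrow> bool" and f c :: "nat \<Rightarrow> nat \<Rightarrow> real" and e :: "nat \<Rightarrow> real"
  assumes factor: "\<And>i j. i < n \<Longrightarrow> j < n \<Longrightarrow>
      (\<Sum>l<m. f l i * c l j) = (if i = j then k else if R i j then 1 else 0)"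
    and ones: "\<And>i. i < n \<Longrightarrow> (\<Sum>l<m. f l i * e l) = 1"
    and "0 < n" "2 * m \<le> n"
  shows "k \<in> \<int>"
proof -
  define A :: "int mat" where "A = mat n n (\<lambda>(i,j). if i \<noteq> j \<and> R i j then 1 else 0)"
  define A' :: "int mat" where "A' = mat n n (\<lambda>(i,j). (if i \<noteq> j \<and> R i j then 1 else 0) - 1)"
  define F :: "real mat" where "F = mat n m (\<lambda>(i,l). f l i)"
  define G :: "real mat" where "G = mat m n (\<lambda>(l,j). c l j)"
  define G' :: "real mat" where "G' = mat m n (\<lambda>(l,j). c l j - e l)"
  have F: "F \<in> carrier_mat n m" and G: "G \<in> carrier_mat m n" and G': "G' \<in> carrier_mat m n"
    by (simp_all add: F_def G_def G'_def)
  have prod: "(F * H) $$ (i,j) = (\<Sum>l<m. f l i * H $$ (l,j))"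
    if "H \<in> carrier_mat m n" "i < n" "j < n" for H i j
    using that by (simp add: F_def scalar_prod_def atLeast0LessThan)
  have "map_mat of_int A + k \<cdot>\<^sub>m 1\<^sub>m n = F * G"
  proof (rule eq_matI)
    fix i j assume "i < dim_row (F * G)" "j < dim_col (F * G)"
    with F G have "i < n" "j < n" by auto
    with G show "(map_mat of_int A + k \<cdot>\<^sub>m 1\<^sub>m n) $$ (i,j) = (F * G) $$ (i,j)"
      by (simp add: prod A_def G_def factor)
  qed (use F G in auto)
  moreover have "map_mat of_int A' + k \<cdot>\<^sub>m 1\<^sub>m n = F * G'"
  proof (rule eq_matI)
    fix i j assume "i < dim_row (F * G')" "j < dim_col (F * G')"
    with F G' have "i < n" "j < n" by auto
    with G' show "(map_mat of_int A' + k \<cdot>\<^sub>m 1\<^sub>m n) $$ (i,j) = (F * G') $$ (i,j)"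
      by (simp add: prod A'_def G'_def factor ones right_diff_distrib sum_subtractf)
  qed (use F G' in auto)
  moreover have "(\<Sum>i<n. A $$ (i,i)) \<noteq> (\<Sum>i<n. A' $$ (i,i))"
    using \<open>0 < n\<close> by (simp add: A_def A'_def)
  ultimately show ?thesis
    using \<open>2 * m \<le> n\<close> by (intro int_of_low_rank_shifts[OF _ _ F G G']) (auto simp: A_def A'_def)
qed

lemma trace_bound_of_low_rank_graph_shift:
  fixes R :: "nat \<Rightarrow> nat \<Rightarrow> bool" and f c :: "nat \<Rightarrow> nat \<Rightarrow> real" and e :: "nat \<Rightarrow> real"
  assumes factor: "\<And>i j. i < n \<Longrightarrow> j < n \<Longrightarrow>
      (\<Sum>l<m. f l i * c l j) = (if i = j then k else if R i j then 1 else 0)"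
    and ones: "\<And>i. i < n \<Longrightarrow> (\<Sum>l<m. f l i * e l) = 1"
  shows "(real n * (k - 1/2))\<^sup>2 \<le> real m * (real n * ((k - 1/2)\<^sup>2 + (real n - 1) / 4))"
proof -
  define h where "h l j = c l j - e l / 2" for l j
  have entry: "(\<Sum>l<m. f l i * h l j) = (if i = j then k else if R i j then 1 else 0) - 1/2"
    if "i < n" "j < n" for i j
  proof -
    have "(\<Sum>l<m. f l i * h l j) = (\<Sum>l<m. f l i * c l j) - (\<Sum>l<m. f l i * e l) / 2"
      by (simp add: h_def right_diff_distrib sum_subtractf sum_divide_distrib)
    thus ?thesis using that by (simp add: factor ones)
  qed
  have "(\<Sum>i<n. \<Sum>j<n. (\<Sum>l<m. f l i * h l j)\<^sup>2) = (\<Sum>i<n. \<Sum>j<n. if i = j then (k - 1/2)\<^sup>2 else 1/4)"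
    by (intro sum.cong refl) (auto simp: entry power2_eq_square)
  also have "\<dots> = (\<Sum>i<n. \<Sum>j<n. 1/4 + (if i = j then (k - 1/2)\<^sup>2 - 1/4 else 0))"
    by (intro sum.cong) auto
  also have "\<dots> = (\<Sum>i<n. real n / 4 + ((k - 1/2)\<^sup>2 - 1/4))"
    by (intro sum.cong refl) (simp add: sum.distrib)
  also have "\<dots> = real n * ((k - 1/2)\<^sup>2 + (real n - 1) / 4)"
    by (simp add: field_simps)
  finally show ?thesis
    using trace_square_le_rank_mult_frobenius[where n = n and m = m and f = f and h = h]
    by (simp add: entry)
qed

lemma shifted_square_le_of_trace_bound:
  fixes k :: real and n m N :: nat
  assumes "m \<le> N" "2 * N \<le> n" "1 \<le> N"
    and bound: "(real n * (k - 1/2))\<^sup>2 \<le> real m * (real n * ((k - 1/2)\<^sup>2 + (real n - 1) / 4))"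
  shows "(k - 1/2)\<^sup>2 \<le> (2 * real N - 1) / 4"
proof -
  define a where "a = (k - 1/2)\<^sup>2"
  have "0 \<le> a" "0 < real n - real N" using assms by (auto simp: a_def)
  have "real n * (real n * a) \<le> real n * (real m * (a + (real n - 1) / 4))"
    using bound by (simp add: a_def power_mult_distrib power2_eq_square algebra_simps)
  hence "real n * a \<le> real m * (a + (real n - 1) / 4)" using assms by simp
  also have "\<dots> \<le> real N * (a + (real n - 1) / 4)"
    using assms \<open>0 \<le> a\<close> by (intro mult_right_mono) auto
  finally have "a * (real n - real N) \<le> real N * (real n - 1) / 4"
    by (simp add: field_simps)
  also have "\<dots> \<le> (2 * real N - 1) / 4 * (real n - real N)"
    using assms mult_nonneg_nonneg[of "real N - 1" "real n - 2 * real N"] by (simp add: field_simps)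
  finally show ?thesis using \<open>0 < real n - real N\<close> by (simp add: a_def)
qed

lemma abs_le_U_of_shifted_square_le:
  fixes k :: real
  assumes "k \<in> \<int>" "1 \<le> N" "(k - 1/2)\<^sup>2 \<le> (2 * real N - 1) / 4"
  shows "\<bar>k\<bar> \<le> real_of_int (U N)"
proof -
  have "(2 * real N - 1) / 4 \<le> (real N)\<^sup>2 / (2 * real N - 2) + 1/4"
  proof (cases "N = 1")
    case False
    with assms have "2 \<le> real N" by simp
    hence "(real N - 1) / 2 \<le> (real N)\<^sup>2 / (2 * real N - 2)"
      by (simp add: field_simps power2_eq_square)
    thus ?thesis by (simp add: field_simps)
  qed simp
  with assms have "sqrt ((k - 1/2)\<^sup>2) \<le> sqrt ((real N)\<^sup>2 / (2 * real N - 2) + 1/4)"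
    by (intro real_sqrt_le_mono) linarith
  hence "\<bar>k - 1/2\<bar> \<le> sqrt ((real N)\<^sup>2 / (2 * real N - 2) + 1/4)" by simp
  hence "\<bar>k\<bar> \<le> 1/2 + sqrt ((real N)\<^sup>2 / (2 * real N - 2) + 1/4)" by linarith
  moreover obtain z where "\<bar>k\<bar> = of_int z" using \<open>k \<in> \<int>\<close> by (metis Ints_abs Ints_cases)
  ultimately show ?thesis by (simp add: U_def le_floor_iff)
qed

section \<open>Polynomial functions on the sphere\<close>

definition basis_monomial :: "'a::euclidean_space multiset \<Rightarrow> 'a \<Rightarrow> real" where
  "basis_monomial M x = (\<Prod>b\<in>#M. x \<bullet> b)"

definition in_monomial_span ::
    "'a::euclidean_space set \<Rightarrow> 'a multiset set \<Rightarrow> ('a \<Rightarrow> real) \<Rightarrow> bool" where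
  "in_monomial_span S Ms f \<longleftrightarrow> (\<exists>c. \<forall>x\<in>S. f x = (\<Sum>M\<in>Ms. c M * basis_monomial M x))"

lemma in_monomial_span_add:
  "in_monomial_span S Ms f \<Longrightarrow> in_monomial_span S Ms g \<Longrightarrow> in_monomial_span S Ms (\<lambda>x. f x + g x)"
proof -
  assume "in_monomial_span S Ms f" "in_monomial_span S Ms g"
  then obtain c d where "\<forall>x\<in>S. f x = (\<Sum>M\<in>Ms. c M * basis_monomial M x)"
    "\<forall>x\<in>S. g x = (\<Sum>M\<in>Ms. d M * basis_monomial M x)"
    unfolding in_monomial_span_def by blast
  thus ?thesis unfolding in_monomial_span_def
    by (intro exI[of _ "\<lambda>M. c M + d M"]) (simp add: distrib_right sum.distrib)
qed

lemma in_monomial_span_scale: "in_monomial_span S Ms f \<Longrightarrow> in_monomial_span S Ms (\<lambda>x. a * f x)"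
proof -
  assume "in_monomial_span S Ms f"
  then obtain c where "\<forall>x\<in>S. f x = (\<Sum>M\<in>Ms. c M * basis_monomial M x)"
    unfolding in_monomial_span_def by blast
  thus ?thesis unfolding in_monomial_span_def
    by (intro exI[of _ "\<lambda>M. a * c M"]) (simp add: sum_distrib_left mult.assoc)
qed

lemma in_monomial_span_sum:
  assumes "finite I" "\<And>i. i \<in> I \<Longrightarrow> in_monomial_span S Ms (f i)"
  shows "in_monomial_span S Ms (\<lambda>x. \<Sum>i\<in>I. f i x)"
  using assms
proof (induction I rule: finite_induct)
  case empty
  show ?case unfolding in_monomial_span_def by (intro exI[of _ "\<lambda>_. 0"]) simp
next
  case (insert i I)
  hence "in_monomial_span S Ms (\<lambda>x. f i x + (\<Sum>i\<in>I. f i x))"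
    by (intro in_monomial_span_add) auto
  thus ?case using insert.hyps by simp
qed

lemma in_monomial_span_mono:
  assumes f: "in_monomial_span S Ms f" and "finite Ms'" "Ms \<subseteq> Ms'"
    and "\<And>x. x \<in> S \<Longrightarrow> f x = g x"
  shows "in_monomial_span S Ms' g"
proof -
  obtain c where c: "\<And>x. x \<in> S \<Longrightarrow> f x = (\<Sum>M\<in>Ms. c M * basis_monomial M x)"
    using f unfolding in_monomial_span_def by blast
  have "g x = (\<Sum>M\<in>Ms'. (if M \<in> Ms then c M else 0) * basis_monomial M x)" if "x \<in> S" for x
  proof -
    have "g x = (\<Sum>M\<in>Ms. c M * basis_monomial M x)"
      using assms(4)[OF that] c[OF that] by (rule trans[OF sym])
    also have "\<dots> = (\<Sum>M\<in>Ms. (if M \<in> Ms then c M else 0) * basis_monomial M x)"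
      by (intro sum.cong) auto
    also have "\<dots> = (\<Sum>M\<in>Ms'. (if M \<in> Ms then c M else 0) * basis_monomial M x)"
      using assms(2,3) by (intro sum.mono_neutral_left) auto
    finally show ?thesis .
  qed
  thus ?thesis
    unfolding in_monomial_span_def by (intro exI[of _ "\<lambda>M. if M \<in> Ms then c M else 0"]) simp
qed

lemma in_monomial_span_mult_coordinate:
  assumes f: "in_monomial_span S (multisets_of_size Basis m) f" and b: "b \<in> Basis"
  shows "in_monomial_span S (multisets_of_size Basis (Suc m)) (\<lambda>x. (x \<bullet> b) * f x)"
proof -
  obtain c where c: "\<And>x. x \<in> S \<Longrightarrow> f x = (\<Sum>M\<in>multisets_of_size Basis m. c M * basis_monomial M x)"
    using f unfolding in_monomial_span_def by blast
  have "(x \<bullet> b) * f x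
      = (\<Sum>M'\<in>add_mset b ` multisets_of_size Basis m. c (M' - {#b#}) * basis_monomial M' x)"
    if "x \<in> S" for x
  proof -
    have "(\<Sum>M'\<in>add_mset b ` multisets_of_size Basis m. c (M' - {#b#}) * basis_monomial M' x)
        = (\<Sum>M\<in>multisets_of_size Basis m. c M * basis_monomial (add_mset b M) x)"
      by (subst sum.reindex) (auto simp: inj_on_def)
    thus ?thesis
      using that by (simp add: c sum_distrib_left basis_monomial_def mult_ac)
  qed
  hence "in_monomial_span S (add_mset b ` multisets_of_size Basis m) (\<lambda>x. (x \<bullet> b) * f x)"
    unfolding in_monomial_span_def by (intro exI[of _ "\<lambda>M'. c (M' - {#b#})"]) simp
  moreover have "add_mset b ` multisets_of_size Basis m \<subseteq> multisets_of_size Basis (Suc m)"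
    using b by (auto simp: multisets_of_size_def)
  ultimately show ?thesis
    by (intro in_monomial_span_mono[OF _ finite_multisets_of_size]) auto
qed

lemma in_monomial_span_mult_inner:
  assumes "in_monomial_span S (multisets_of_size Basis m) f"
  shows "in_monomial_span S (multisets_of_size Basis (Suc m)) (\<lambda>x. (x \<bullet> v) * f x)"
proof -
  have "in_monomial_span S (multisets_of_size Basis (Suc m))
      (\<lambda>x. \<Sum>b\<in>Basis. (v \<bullet> b) * ((x \<bullet> b) * f x))"
    using assms
    by (intro in_monomial_span_sum in_monomial_span_scale in_monomial_span_mult_coordinate) auto
  moreover have "(\<Sum>b\<in>Basis. (v \<bullet> b) * ((x \<bullet> b) * f x)) = (x \<bullet> v) * f x" for x
    by (simp add: euclidean_inner[of x v] sum_distrib_left mult_ac)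
  ultimately show ?thesis by simp
qed

lemma in_monomial_span_mult_norm:
  assumes "in_monomial_span S (multisets_of_size Basis m) f"
  shows "in_monomial_span S (multisets_of_size Basis (Suc (Suc m))) (\<lambda>x. (x \<bullet> x) * f x)"
proof -
  have "in_monomial_span S (multisets_of_size Basis (Suc (Suc m)))
      (\<lambda>x. \<Sum>b\<in>Basis. (x \<bullet> b) * ((x \<bullet> b) * f x))"
    using assms by (intro in_monomial_span_sum in_monomial_span_mult_coordinate) auto
  moreover have "(\<Sum>b\<in>Basis. (x \<bullet> b) * ((x \<bullet> b) * f x)) = (x \<bullet> x) * f x" for x
    by (simp add: euclidean_inner[of x x] sum_distrib_left mult_ac)
  ultimately show ?thesis by simp
qed

lemma in_monomial_span_inner_power:
  "in_monomial_span S (multisets_of_size Basis (j + 2 * i)) (\<lambda>x. (x \<bullet> y) ^ j * (x \<bullet> x) ^ i)"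
proof (induction i)
  case 0
  show ?case
  proof (induction j)
    case 0
    have "multisets_of_size Basis 0 = {{#}}" by (auto simp: multisets_of_size_def)
    thus ?case
      unfolding in_monomial_span_def by (intro exI[of _ "\<lambda>_. 1"]) (simp add: basis_monomial_def)
  next
    case (Suc j)
    from in_monomial_span_mult_inner[OF Suc, of y] show ?case by (simp add: mult_ac)
  qed
next
  case (Suc i)
  from in_monomial_span_mult_norm[OF Suc] show ?case by (simp add: mult_ac)
qed

definition sphere_monomials :: "nat \<Rightarrow> 'a::euclidean_space multiset set" where
  "sphere_monomials d = multisets_of_size Basis d \<union> multisets_of_size Basis (d - 1)"

lemma finite_sphere_monomials: "finite (sphere_monomials d)"
  by (simp add: sphere_monomials_def finite_multisets_of_size)

lemma card_sphere_monomials: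
  "card (sphere_monomials d :: 'a::euclidean_space multiset set)
     \<le> (DIM('a) + d - 1 choose d) + (DIM('a) + d - 2 choose (d - 1))"
proof -
  have "card (sphere_monomials d :: 'a multiset set)
      \<le> card (multisets_of_size Basis d :: 'a multiset set)
        + card (multisets_of_size Basis (d - 1) :: 'a multiset set)"
    unfolding sphere_monomials_def by (rule card_Un_le)
  thus ?thesis by (cases d) (simp_all add: card_multisets_of_size)
qed

text \<open>On the sphere \<open>x \<bullet> x = 1\<close>, so \<open>(x \<bullet> y) ^ j\<close> can be padded by powers of \<open>x \<bullet> x\<close>
  to a homogeneous polynomial of degree \<open>d\<close> or \<open>d - 1\<close>, whichever has the parity of \<open>j\<close>.\<close>

lemma in_monomial_span_inner_power_sphere:
  fixes y :: "'a::euclidean_space"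
  assumes "j \<le> d"
  shows "in_monomial_span (sphere 0 1) (sphere_monomials d) (\<lambda>x. (x \<bullet> y) ^ j)"
proof -
  define e where "e = (if even (d - j) then d else d - 1)"
  have "j \<le> e" "even (e - j)" using assms unfolding e_def by (auto, presburger+)
  then obtain i where e: "e = j + 2 * i" by (metis add_diff_inverse_nat evenE not_le)
  have sub: "multisets_of_size Basis (j + 2 * i) \<subseteq> (sphere_monomials d :: 'a multiset set)"
    unfolding e[symmetric] e_def sphere_monomials_def by auto
  have "(x \<bullet> y) ^ j * (x \<bullet> x) ^ i = (x \<bullet> y) ^ j" if "x \<in> sphere 0 1" for x :: 'a
  proof -
    have "x \<bullet> x = 1" using that by (simp add: norm_eq_1[symmetric])
    thus ?thesis by simp
  qed
  thus ?thesis
    by (rule in_monomial_span_mono[OF in_monomial_span_inner_power finite_sphere_monomials sub])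
qed

lemma in_monomial_span_poly_inner_sphere:
  fixes y :: "'a::euclidean_space"
  assumes "degree P \<le> d"
  shows "in_monomial_span (sphere 0 1) (sphere_monomials d) (\<lambda>x. poly P (x \<bullet> y))"
proof -
  have "in_monomial_span (sphere 0 1) (sphere_monomials d)
      (\<lambda>x::'a. \<Sum>j\<le>degree P. coeff P j * (x \<bullet> y) ^ j)"
    using assms
    by (intro in_monomial_span_sum in_monomial_span_scale in_monomial_span_inner_power_sphere) auto
  thus ?thesis by (simp add: poly_altdef)
qed

lemma sphere_gram_factorization:
  fixes xs :: "'a::euclidean_space list" and P :: "real poly"
  assumes "set xs \<subseteq> sphere 0 1" "degree P \<le> d"
  obtains f c :: "nat \<Rightarrow> nat \<Rightarrow> real" and e :: "nat \<Rightarrow> real" where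
    "\<And>i j. i < length xs \<Longrightarrow> j < length xs \<Longrightarrow>
       (\<Sum>l<card (sphere_monomials d :: 'a multiset set). f l i * c l j) = poly P (xs ! i \<bullet> xs ! j)"
    "\<And>i. i < length xs \<Longrightarrow> (\<Sum>l<card (sphere_monomials d :: 'a multiset set). f l i * e l) = 1"
proof -
  obtain ts where ts: "distinct ts" "set ts = (sphere_monomials d :: 'a multiset set)"
    using finite_distinct_list[OF finite_sphere_monomials] by blast
  have sum_ts: "(\<Sum>M\<in>sphere_monomials d. g M)
      = (\<Sum>l<card (sphere_monomials d :: 'a multiset set). g (ts ! l))"
    for g :: "'a multiset \<Rightarrow> real"
  proof -
    have "(\<Sum>M\<in>set ts. g M) = sum_list (map g ts)"
      by (simp add: sum_list_distinct_conv_sum_set ts(1))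
    also have "\<dots> = (\<Sum>l<length ts. g (ts ! l))" by (simp add: sum_list_sum_nth atLeast0LessThan)
    finally show ?thesis using ts by (simp add: distinct_card[symmetric])
  qed
  have "\<forall>y::'a. \<exists>C. \<forall>x\<in>sphere 0 1.
      poly P (x \<bullet> y) = (\<Sum>M\<in>sphere_monomials d. C M * basis_monomial M x)"
    using in_monomial_span_poly_inner_sphere[OF assms(2)] unfolding in_monomial_span_def by blast
  then obtain C where C: "\<And>y x :: 'a. x \<in> sphere 0 1 \<Longrightarrow>
      poly P (x \<bullet> y) = (\<Sum>M\<in>sphere_monomials d. C y M * basis_monomial M x)"
    by metis
  obtain E where E: "\<forall>x \<in> sphere 0 1.
      (x \<bullet> (0::'a)) ^ 0 = (\<Sum>M\<in>sphere_monomials d. E M * basis_monomial M x)"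
    using in_monomial_span_inner_power_sphere[of 0 d "0::'a"] unfolding in_monomial_span_def by blast
  show thesis
  proof
    fix i j assume "i < length xs" "j < length xs"
    hence "xs ! i \<in> sphere 0 1" using assms(1) nth_mem by blast
    thus "(\<Sum>l<card (sphere_monomials d :: 'a multiset set).
        basis_monomial (ts ! l) (xs ! i) * C (xs ! j) (ts ! l)) = poly P (xs ! i \<bullet> xs ! j)"
      by (simp add: C sum_ts mult.commute)
  next
    fix i assume "i < length xs"
    hence "xs ! i \<in> sphere 0 1" using assms(1) nth_mem by blast
    with E show "(\<Sum>l<card (sphere_monomials d :: 'a multiset set).
        basis_monomial (ts ! l) (xs ! i) * E (ts ! l)) = 1"
      by (simp add: sum_ts mult.commute)
  qed
qed

section \<open>Spherical \<open>s\<close>-distance sets\<close>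

lemma inner_products_sphere_eq_image_distances:
  fixes X :: "'a::real_inner set"
  assumes "X \<subseteq> sphere 0 1"
  shows "B X = (\<lambda>t. 1 - t\<^sup>2 / 2) ` distances X"
proof -
  have eq: "x \<bullet> y = 1 - (dist x y)\<^sup>2 / 2" if "x \<in> X" "y \<in> X" for x y
  proof -
    have "x \<bullet> x = 1" "y \<bullet> y = 1" using assms that by (auto simp flip: norm_eq_1)
    hence "(dist x y)\<^sup>2 = 2 - 2 * (x \<bullet> y)"
      by (simp add: dist_norm power2_norm_eq_inner inner_diff_left inner_diff_right inner_commute)
    thus ?thesis by (simp add: field_simps)
  qed
  show ?thesis
  proof (intro equalityI subsetI)
    fix b assume "b \<in> B X"
    then obtain x y where "x \<in> X" "y \<in> X" "x \<noteq> y" "b = x \<bullet> y" unfolding B_def by blast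
    thus "b \<in> (\<lambda>t. 1 - t\<^sup>2 / 2) ` distances X"
      unfolding distances_def by (intro image_eqI[of _ _ "dist x y"]) (auto simp: eq)
  next
    fix b assume "b \<in> (\<lambda>t. 1 - t\<^sup>2 / 2) ` distances X"
    then obtain x y where "x \<in> X" "y \<in> X" "x \<noteq> y" "b = 1 - (dist x y)\<^sup>2 / 2"
      unfolding distances_def by blast
    hence "b = x \<bullet> y" using eq by simp
    thus "b \<in> B X" unfolding B_def using \<open>x \<in> X\<close> \<open>y \<in> X\<close> \<open>x \<noteq> y\<close> by blast
  qed
qed

lemma finite_distances: "finite X \<Longrightarrow> finite (distances X)"
proof -
  assume "finite X"
  have "distances X \<subseteq> (\<lambda>(x, y). dist x y) ` (X \<times> X)" unfolding distances_def by auto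
  thus ?thesis using \<open>finite X\<close> by (meson finite_SigmaI finite_imageI finite_subset)
qed

lemma poly_lagrange_basis_exists:
  fixes S :: "real set"
  assumes "finite S"
  obtains P where "degree P \<le> card (S - {\<beta>})" "\<And>t. poly P t = (\<Prod>\<gamma>\<in>S - {\<beta>}. (t - \<gamma>) / (\<beta> - \<gamma>))"
proof
  let ?P = "\<Prod>\<gamma>\<in>S - {\<beta>}. [:- \<gamma> / (\<beta> - \<gamma>), 1 / (\<beta> - \<gamma>):]"
  show "poly ?P t = (\<Prod>\<gamma>\<in>S - {\<beta>}. (t - \<gamma>) / (\<beta> - \<gamma>))" for t
    by (simp add: poly_prod diff_divide_distrib)
  have "degree ?P \<le> (\<Sum>\<gamma>\<in>S - {\<beta>}. degree [:- \<gamma> / (\<beta> - \<gamma>), 1 / (\<beta> - \<gamma>):])"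
    using degree_prod_sum_le[of "S - {\<beta>}" "\<lambda>\<gamma>. [:- \<gamma> / (\<beta> - \<gamma>), 1 / (\<beta> - \<gamma>):]"] assms
    by (simp add: o_def)
  also have "\<dots> \<le> (\<Sum>\<gamma>\<in>S - {\<beta>}. 1)" by (intro sum_mono) auto
  finally show "degree ?P \<le> card (S - {\<beta>})" by simp
qed

lemma s_distance_set_annihilator:
  fixes X :: "'a::real_inner set"
  assumes "s_distance_set X s" "X \<subseteq> sphere 0 1" "\<beta> \<in> B X"
  obtains P :: "real poly" where "degree P \<le> s - 1"
    and "\<And>x y. x \<in> X \<Longrightarrow> y \<in> X \<Longrightarrow> poly P (x \<bullet> y) =
      (if x = y then (\<Prod>\<gamma>\<in>B X - {\<beta>}. (1 - \<gamma>) / (\<beta> - \<gamma>)) else if x \<bullet> y = \<beta> then 1 else 0)"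
proof -
  have "finite X" "card (distances X) = s" using assms(1) by (auto simp: s_distance_set_def)
  hence "finite (B X)" "card (B X) \<le> s"
    using inner_products_sphere_eq_image_distances[OF assms(2)]
      finite_distances[OF \<open>finite X\<close>] card_image_le[OF finite_distances[OF \<open>finite X\<close>]]
    by auto
  obtain P where "degree P \<le> card (B X - {\<beta>})"
    and P: "\<And>t. poly P t = (\<Prod>\<gamma>\<in>B X - {\<beta>}. (t - \<gamma>) / (\<beta> - \<gamma>))"
    using poly_lagrange_basis_exists[OF \<open>finite (B X)\<close>, where \<beta> = \<beta>] by blast
  hence "degree P \<le> s - 1"
    using \<open>card (B X) \<le> s\<close> assms(3) \<open>finite (B X)\<close> by (simp add: card_Diff_singleton)
  moreover have "poly P (x \<bullet> y) =
      (if x = y then (\<Prod>\<gamma>\<in>B X - {\<beta>}. (1 - \<gamma>) / (\<beta> - \<gamma>)) else if x \<bullet> y = \<beta> then 1 else 0)"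
    if "x \<in> X" "y \<in> X" for x y
  proof -
    have "x \<bullet> y \<in> B X" if "x \<noteq> y" using \<open>x \<in> X\<close> \<open>y \<in> X\<close> that unfolding B_def by blast
    moreover have "x \<bullet> x = 1" using assms(2) that by (auto simp flip: norm_eq_1)
    ultimately show ?thesis using \<open>finite (B X)\<close> by (auto simp: P intro: prod_zero)
  qed
  ultimately show thesis by (rule that)
qed

lemma annihilator_value_int_and_bounded:
  fixes X :: "'a::euclidean_space set" and P :: "real poly"
  assumes "finite X" "X \<subseteq> sphere 0 1" "degree P \<le> d"
    and P: "\<And>x y. x \<in> X \<Longrightarrow> y \<in> X \<Longrightarrow>
      poly P (x \<bullet> y) = (if x = y then k else if x \<bullet> y = \<beta> then 1 else 0)"
    and "card (sphere_monomials d :: 'a multiset set) \<le> N" "1 \<le> N" "2 * N \<le> card X"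
  shows "k \<in> \<int> \<and> \<bar>k\<bar> \<le> real_of_int (U N)"
proof -
  obtain xs where xs: "distinct xs" "set xs = X" using finite_distinct_list[OF assms(1)] by blast
  let ?n = "length xs" and ?m = "card (sphere_monomials d :: 'a multiset set)"
  obtain f c e where
    fc: "\<And>i j. i < ?n \<Longrightarrow> j < ?n \<Longrightarrow> (\<Sum>l<?m. f l i * c l j) = poly P (xs ! i \<bullet> xs ! j)"
    and fe: "\<And>i. i < ?n \<Longrightarrow> (\<Sum>l<?m. f l i * e l) = 1"
    by (rule sphere_gram_factorization[of xs P d]) (use assms(2,3) xs in auto)
  have factor:
    "(\<Sum>l<?m. f l i * c l j) = (if i = j then k else if xs ! i \<bullet> xs ! j = \<beta> then 1 else 0)"
    if "i < ?n" "j < ?n" for i j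
  proof -
    have "xs ! i \<in> X" "xs ! j \<in> X" using that xs(2) nth_mem by blast+
    moreover have "xs ! i = xs ! j \<longleftrightarrow> i = j" using that nth_eq_iff_index_eq[OF xs(1)] by blast
    ultimately show ?thesis unfolding fc[OF that] by (simp add: P)
  qed
  have "2 * N \<le> ?n" using assms(7) distinct_card[OF xs(1)] by (simp add: xs(2))
  with assms(5,6) have "0 < ?n" "2 * ?m \<le> ?n" by linarith+
  hence "k \<in> \<int>" using int_of_low_rank_graph_shift[where n = "length xs", OF factor fe] by blast
  moreover have "\<bar>k\<bar> \<le> real_of_int (U N)"
    using trace_bound_of_low_rank_graph_shift[where n = "length xs", OF factor fe]
      assms(5,6) \<open>2 * N \<le> ?n\<close> \<open>k \<in> \<int>\<close>
    by (intro abs_le_U_of_shifted_square_le shifted_square_le_of_trace_bound) auto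
  ultimately show ?thesis ..
qed

theorem theorem5p1:
  fixes X :: "'a::euclidean_space set" and s :: nat
  assumes "s \<ge> 2"
    and "s_distance_set X s"
    and "X \<subseteq> sphere 0 1"
    and "card X \<ge> 2 * (((DIM('a) + s - 2) choose (s - 1)) + ((DIM('a) + s - 3) choose (s - 2)))"
  shows "\<forall>\<beta>\<in>B X.
           (\<Prod>\<gamma>\<in>B X - {\<beta>}. (1 - \<gamma>) / (\<beta> - \<gamma>)) \<in> \<int> \<and>
           \<bar>\<Prod>\<gamma>\<in>B X - {\<beta>}. (1 - \<gamma>) / (\<beta> - \<gamma>)\<bar>
             \<le> real_of_int (U (((DIM('a) + s - 2) choose (s - 1)) + ((DIM('a) + s - 3) choose (s - 2))))"
proof
  fix \<beta> assume "\<beta> \<in> B X"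
  let ?N = "((DIM('a) + s - 2) choose (s - 1)) + ((DIM('a) + s - 3) choose (s - 2))"
  obtain P where deg: "degree P \<le> s - 1" and P: "\<And>x y. x \<in> X \<Longrightarrow> y \<in> X \<Longrightarrow> poly P (x \<bullet> y) =
      (if x = y then (\<Prod>\<gamma>\<in>B X - {\<beta>}. (1 - \<gamma>) / (\<beta> - \<gamma>)) else if x \<bullet> y = \<beta> then 1 else 0)"
    using s_distance_set_annihilator[OF assms(2,3) \<open>\<beta> \<in> B X\<close>] by blast
  have "DIM('a) + (s - 1) - 1 = DIM('a) + s - 2" "DIM('a) + (s - 1) - 2 = DIM('a) + s - 3"
    "s - 1 - 1 = s - 2" using assms(1) by auto
  hence card: "card (sphere_monomials (s - 1) :: 'a multiset set) \<le> ?N"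
    using card_sphere_monomials[where 'a='a, of "s - 1"] by simp
  have "s - 1 \<le> DIM('a) + s - 2" using assms(1) DIM_positive[where 'a='a] by linarith
  hence "0 < (DIM('a) + s - 2) choose (s - 1)" by (rule zero_less_binomial)
  hence pos: "1 \<le> ?N" by linarith
  have "finite X" using assms(2) by (simp add: s_distance_set_def)
  from annihilator_value_int_and_bounded[OF this assms(3) deg P card pos assms(4)]
  show "(\<Prod>\<gamma>\<in>B X - {\<beta>}. (1 - \<gamma>) / (\<beta> - \<gamma>)) \<in> \<int> \<and>
      \<bar>\<Prod>\<gamma>\<in>B X - {\<beta>}. (1 - \<gamma>) / (\<beta> - \<gamma>)\<bar> \<le> real_of_int (U ?N)" .
qed

end
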